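(* Let $m\ge 1$ and $n=2^m-1$. Let $C\subset F^m$ be a $1$-code containing $0^m$, and put $\dot C := C\setminus\{0^m\}$. Then the set $$P(C) := \Big( H \setminus \bigcup_{\iota\in \dot C}\big(R_\iota+ \hat{\iota} + \bar e^{(\iota)}\big)\Big) \cup \bigcup_{\iota\in \dot C}\big(R_\iota+ \hat{\iota}\big)$$ is a $1$-perfect code in $F^n$. Moreover, $$C=\{\iota\in F^m \mid (\iota,0^{n-m})\in P(C)\}.$$
   Context: $F^m$ denotes the vector space of binary $m$-tuples over $GF(2)$, and $\dot F^m := F^m\setminus\{0^m\}$. Let $\pi^{(1)}=(10\ldots0),\ldots,\pi^{(m)}=(0\ldots01)$ be the standard basis of $F^m$. The coordinates of words $\bar w\in F^n$ ($n=2^m-1$) are indexed by the elements of $\dot F^m$, $\bar w=\{w_\alpha\}_{\alpha\in\dot F^m}$, where the first $m$ coordinates have indices $\pi^{(1)},\ldots,\pi^{(m)}$ (in this order) and the remaining $n-m$ indices are in some fixed order. $\{\bar e^{(\iota)}\}_{\iota\in\dot F^m}$ is the standard basis of $F^n$ ($\bar e^{(\iota)}$ has a single $1$ in the coordinate indexed by $\iota$). For $\alpha\in F^m$, $\hat\alpha := (\alpha,0^{n-m})\in F^n$, i.e. $\hat\alpha=\sum_{i=1}^m \alpha_i \bar e^{(\pi^{(i)})}$. The Hamming code is $H:=\{\bar c\in F^n \mid \sum_{\alpha\in\dot F^m} c_\alpha\alpha = 0^m\}$. For $\iota\in\dot F^m$, $R_\iota := \{\bar c\in H \mid c_\alpha=c_{\alpha+\iota}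 \text{ for all } \alpha\in F^m\setminus\{0^m,\iota\}\}$. The Hamming distance is the number of differing positions; the neighborhood $\Omega(M)$ of $M$ is the set of words at distance at most $1$ from $M$. A set $C$ of words is a $1$-code if the neighborhoods of its elements are pairwise disjoint; a $1$-code $P\subset F^n$ is $1$-perfect if $\Omega(P)=F^n$. *)

theory Defs
  imports Main
begin

text \<open>Binary words with coordinates indexed by a set I: functions I-index => bool
  (bool = GF(2), True = 1), required to be False outside I.
  F^m: I = {..<m} (coordinate i corresponds to pi^(i+1)).
  F^n with n = 2^m - 1: I = the set of nonzero vectors of F^m.\<close>

definition space :: "'i set \<Rightarrow> ('i \<Rightarrow> bool) set" where
  "space I = {x. \<forall>i. i \<notin> I \<longrightarrow> \<not> x i}"

definition zw :: "'i \<Rightarrow> bool" where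
  "zw = (\<lambda>_. False)"

definition wadd :: "('i \<Rightarrow> bool) \<Rightarrow> ('i \<Rightarrow> bool) \<Rightarrow> ('i \<Rightarrow> bool)" where
  "wadd x y = (\<lambda>i. x i \<noteq> y i)"

definition hdist :: "'i set \<Rightarrow> ('i \<Rightarrow> bool) \<Rightarrow> ('i \<Rightarrow> bool) \<Rightarrow> nat" where
  "hdist I x y = card {i \<in> I. x i \<noteq> y i}"

definition nbhd :: "'i set \<Rightarrow> ('i \<Rightarrow> bool) set \<Rightarrow> ('i \<Rightarrow> bool) set" where
  "nbhd I M = {x \<in> space I. \<exists>c\<in>M. hdist I x c \<le> 1}"

definition one_code :: "'i set \<Rightarrow> ('i \<Rightarrow> bool) set \<Rightarrow> bool" where
  "one_code I C \<longleftrightarrow> C \<subseteq> space I \<and>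
     (\<forall>c\<in>C. \<forall>d\<in>C. c \<noteq> d \<longrightarrow> nbhd I {c} \<inter> nbhd I {d} = {})"

definition one_perfect :: "'i set \<Rightarrow> ('i \<Rightarrow> bool) set \<Rightarrow> bool" where
  "one_perfect I P \<longleftrightarrow> one_code I P \<and> nbhd I P = space I"

type_synonym vec = "nat \<Rightarrow> bool"
type_synonym word = "vec \<Rightarrow> bool"

abbreviation Fm :: "nat \<Rightarrow> vec set" where
  "Fm m \<equiv> space {..<m}"

definition Fdot :: "nat \<Rightarrow> vec set" where
  "Fdot m = Fm m - {zw}"

abbreviation Fn :: "nat \<Rightarrow> word set" where
  "Fn m \<equiv> space (Fdot m)"

text \<open>Hamming code: sum over alpha of c_alpha * alpha = 0 in GF(2)^m, i.e. every
  coordinate of the sum has even parity.\<close>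
definition Ham :: "nat \<Rightarrow> word set" where
  "Ham m = {c \<in> Fn m. \<forall>i<m. even (card {\<alpha> \<in> Fdot m. c \<alpha> \<and> \<alpha> i})}"

definition R :: "nat \<Rightarrow> vec \<Rightarrow> word set" where
  "R m \<iota> = {c \<in> Ham m. \<forall>\<alpha> \<in> Fm m - {zw, \<iota>}. c \<alpha> = c (wadd \<alpha> \<iota>)}"

definition unitv :: "nat \<Rightarrow> vec" where
  "unitv i = (\<lambda>j. j = i)"

text \<open>hat iota = (iota, 0^(n-m))\<close>
definition hat :: "nat \<Rightarrow> vec \<Rightarrow> word" where
  "hat m \<iota> = (\<lambda>a. \<exists>i<m. a = unitv i \<and> \<iota> i)"

definition ew :: "vec \<Rightarrow> word" where
  "ew \<iota> = (\<lambda>a. a = \<iota>)"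

definition translate :: "word set \<Rightarrow> word \<Rightarrow> word set" where
  "translate M v = (\<lambda>c. wadd c v) ` M"

definition PC :: "nat \<Rightarrow> vec set \<Rightarrow> word set" where
  "PC m C = (Ham m - (\<Union>\<iota>\<in>C - {zw}. translate (R m \<iota>) (wadd (hat m \<iota>) (ew \<iota>))))
            \<union> (\<Union>\<iota>\<in>C - {zw}. translate (R m \<iota>) (hat m \<iota>))"

end

theory Submission
  imports Defs "HOL-Library.Disjoint_Sets"
begin

text \<open>\<open>P(C)\<close> arises from the perfect Hamming code \<open>H\<close> by switching: for each nonzero \<open>\<iota> \<in> C\<close>
  the coset \<open>T\<^sub>\<iota> = R\<^sub>\<iota> + hat \<iota> + e\<^sub>\<iota>\<close> inside \<open>H\<close> is replaced by \<open>T\<^sub>\<iota> + e\<^sub>\<iota> = R\<^sub>\<iota> + hat \<iota>\<close>. Because \<open>R\<^sub>\<iota>\<close>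
  contains every word \<open>e\<^sub>\<iota> + e\<^sub>\<beta> + e\<^sub>\<beta>\<^sub>+\<^sub>\<iota>\<close>, both sets have the same 1-neighbourhood, and \<open>T\<^sub>\<iota> + e\<^sub>\<iota>\<close> is a
  1-code as a translate of a subset of \<open>H\<close>; exchanging pairwise disjoint pieces of a perfect code for
  such sets keeps it perfect. The pieces are disjoint because distinct words of \<open>C\<close> are at distance
  at least 3: if \<open>a\<close> is a unit vector with \<open>a\<^sub>i = \<iota>\<^sub>i = 1\<close> and \<open>\<kappa>\<^sub>i = 0\<close>, a word of \<open>T\<^sub>\<iota> \<inter> T\<^sub>\<kappa>\<close> would
  satisfy four incompatible parity conditions on its coordinates \<open>a, a + \<iota>, a + \<kappa>, a + \<iota> + \<kappa>\<close>.
  Finally \<open>hat \<iota>\<close> has syndrome \<open>\<iota>\<close>, which recovers \<open>C\<close> from \<open>P(C)\<close>.\<close>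

interpretation wadd: comm_monoid wadd zw
  by unfold_locales (auto simp: wadd_def zw_def fun_eq_iff)

lemma zw_apply [simp]: "zw a = False"
  by (simp add: zw_def)

lemmas wadd_ac = wadd.assoc wadd.commute wadd.left_commute

lemma wadd_self [simp]: "wadd x x = zw"
  by (auto simp: wadd_def zw_def fun_eq_iff)

lemma wadd_cancel_left [simp]: "wadd x (wadd x y) = y"
  by (auto simp: wadd_def fun_eq_iff)

lemma wadd_apply: "wadd x y a = (x a \<noteq> y a)"
  by (simp add: wadd_def)

lemma wadd_eq_self_iff [simp]: "wadd x y = y \<longleftrightarrow> x = zw" "wadd x y = x \<longleftrightarrow> y = zw"
  by (auto simp: wadd_apply fun_eq_iff)

lemma wadd_eq_iff: "wadd x y = z \<longleftrightarrow> y = wadd x z"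
  by (auto simp: wadd_def fun_eq_iff)

lemma zw_space [simp]: "zw \<in> space I"
  by (simp add: space_def zw_def)

lemma wadd_space: "x \<in> space I \<Longrightarrow> y \<in> space I \<Longrightarrow> wadd x y \<in> space I"
  by (auto simp: space_def wadd_def)

lemma finite_space: "finite I \<Longrightarrow> finite (space I)"
proof -
  assume "finite I"
  have "space I \<subseteq> (\<lambda>S i. i \<in> S) ` Pow I"
  proof
    fix x assume "x \<in> space I"
    then have "x = (\<lambda>i. i \<in> {i. x i})" "{i. x i} \<subseteq> I" by (auto simp: space_def)
    then show "x \<in> (\<lambda>S i. i \<in> S) ` Pow I" by blast
  qed
  with \<open>finite I\<close> show ?thesis by (meson finite_Pow_iff finite_imageI finite_subset)
qed

lemma hdist_wadd_right: "hdist I (wadd x z) (wadd y z) = hdist I x y"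
  unfolding hdist_def wadd_def by metis

lemma hdist_le_1_iff:
  assumes "finite I" "x \<in> space I" "y \<in> space I"
  shows "hdist I x y \<le> 1 \<longleftrightarrow> x = y \<or> (\<exists>\<beta>\<in>I. x = wadd y (\<lambda>a. a = \<beta>))"
proof -
  let ?D = "{i \<in> I. x i \<noteq> y i}"
  have eq: "x = y \<longleftrightarrow> ?D = {}"
    using assms(2,3) by (auto simp: space_def fun_eq_iff)
  have single: "x = wadd y (\<lambda>a. a = \<beta>) \<longleftrightarrow> ?D = {\<beta>}" if "\<beta> \<in> I" for \<beta>
    using that assms(2,3) unfolding space_def fun_eq_iff wadd_def by blast
  have "card ?D \<le> 1 \<longleftrightarrow> ?D = {} \<or> (\<exists>\<beta>\<in>I. ?D = {\<beta>})"
  proof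
    assume "card ?D \<le> 1"
    then have "\<forall>a\<in>?D. \<forall>b\<in>?D. a = b"
      using \<open>finite I\<close> card_le_Suc0_iff_eq[of ?D] by simp
    then show "?D = {} \<or> (\<exists>\<beta>\<in>I. ?D = {\<beta>})"
      by blast
  next
    assume "?D = {} \<or> (\<exists>\<beta>\<in>I. ?D = {\<beta>})"
    then show "card ?D \<le> 1"
    proof (elim disjE bexE)
      fix \<beta> assume "?D = {\<beta>}"
      then show ?thesis unfolding \<open>?D = {\<beta>}\<close> by simp
    qed (simp only: card.empty)
  qed
  then show ?thesis
    unfolding hdist_def using eq single by blast
qed

lemma one_code_iff:
  "one_code I C \<longleftrightarrow> C \<subseteq> space I \<and>
     (\<forall>x\<in>space I. \<forall>c\<in>C. \<forall>d\<in>C. hdist I x c \<le> 1 \<longrightarrow> hdist I x d \<le> 1 \<longrightarrow> c = d)"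
  unfolding one_code_def nbhd_def by blast

lemma nbhd_eq_space_iff:
  "nbhd I M = space I \<longleftrightarrow> (\<forall>x\<in>space I. \<exists>c\<in>M. hdist I x c \<le> 1)"
  unfolding nbhd_def by blast

lemma one_code_subset: "one_code I C \<Longrightarrow> D \<subseteq> C \<Longrightarrow> one_code I D"
  unfolding one_code_def by blast

lemma one_code_translate:
  assumes "one_code I C" "v \<in> space I"
  shows "one_code I (translate C v)"
  unfolding one_code_iff
proof (intro conjI ballI impI)
  show "translate C v \<subseteq> space I"
    using assms by (auto simp: one_code_iff translate_def wadd_space)
next
  fix x c d assume x: "x \<in> space I" and "c \<in> translate C v" "d \<in> translate C v"
    and near: "hdist I x c \<le> 1" "hdist I x d \<le> 1"
  then obtain c' d' where cd: "c' \<in> C" "c = wadd c' v" "d' \<in> C" "d = wadd d' v"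
    by (auto simp: translate_def)
  have "hdist I x (wadd e v) = hdist I (wadd x v) e" for e
    using hdist_wadd_right[of I "wadd x v" v e] by (simp add: wadd.assoc)
  with near cd have "hdist I (wadd x v) c' \<le> 1" "hdist I (wadd x v) d' \<le> 1"
    by simp_all
  with assms x cd have "c' = d'"
    by (meson one_code_iff wadd_space)
  with cd show "c = d" by simp
qed

lemma one_perfect_switch:
  assumes H: "one_perfect I H"
    and T_sub: "\<And>k. k \<in> K \<Longrightarrow> T k \<subseteq> H"
    and T_disj: "disjoint_family_on T K"
    and T'_code: "\<And>k. k \<in> K \<Longrightarrow> one_code I (T' k)"
    and T'_nbhd: "\<And>k. k \<in> K \<Longrightarrow> nbhd I (T' k) = nbhd I (T k)"
  shows "one_perfect I ((H - (\<Union>k\<in>K. T k)) \<union> (\<Union>k\<in>K. T' k))" (is "one_perfect I ?P")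
proof -
  have H_sub: "H \<subseteq> space I" and H_uniq:
    "\<And>x c d. x \<in> space I \<Longrightarrow> c \<in> H \<Longrightarrow> d \<in> H \<Longrightarrow> hdist I x c \<le> 1 \<Longrightarrow> hdist I x d \<le> 1 \<Longrightarrow> c = d"
    using H by (auto simp: one_perfect_def one_code_iff)
  have H_cover: "\<And>x. x \<in> space I \<Longrightarrow> \<exists>c\<in>H. hdist I x c \<le> 1"
    using H by (simp add: one_perfect_def nbhd_eq_space_iff)
  have near_T: "(\<exists>t\<in>T k. hdist I x t \<le> 1) \<longleftrightarrow> (\<exists>y\<in>T' k. hdist I x y \<le> 1)"
    if "k \<in> K" "x \<in> space I" for k x
    using T'_nbhd[OF that(1)] that(2) unfolding nbhd_def by blast
  have classify: "(p = c \<and> c \<notin> (\<Union>k\<in>K. T k)) \<or> (\<exists>k\<in>K. p \<in> T' k \<and> c \<in> T k)"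
    if x: "x \<in> space I" and c: "c \<in> H" "hdist I x c \<le> 1" and p: "p \<in> ?P" "hdist I x p \<le> 1"
    for x c p
  proof (cases "p \<in> H - (\<Union>k\<in>K. T k)")
    case True
    then show ?thesis using H_uniq[OF x _ c(1) p(2) c(2)] by blast
  next
    case False
    then obtain k where k: "k \<in> K" "p \<in> T' k" using p by blast
    then obtain t where "t \<in> T k" "hdist I x t \<le> 1" using near_T[OF k(1) x] p(2) by blast
    with T_sub[OF k(1)] have "t = c" using H_uniq[OF x _ c(1) _ c(2)] by blast
    with k \<open>t \<in> T k\<close> show ?thesis by blast
  qed
  show ?thesis
    unfolding one_perfect_def one_code_iff nbhd_eq_space_iff
  proof (intro conjI ballI impI)
    show "?P \<subseteq> space I"
      using H_sub T'_code by (auto simp: one_code_iff)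
  next
    fix x assume x: "x \<in> space I"
    then obtain c where c: "c \<in> H" "hdist I x c \<le> 1" using H_cover by blast
    show "\<exists>p\<in>?P. hdist I x p \<le> 1"
    proof (cases "c \<in> (\<Union>k\<in>K. T k)")
      case True
      then obtain k where "k \<in> K" "c \<in> T k" by blast
      with near_T[OF _ x] c show ?thesis by blast
    qed (use c in blast)
  next
    fix x p q assume x: "x \<in> space I" and p: "p \<in> ?P" "hdist I x p \<le> 1"
      and q: "q \<in> ?P" "hdist I x q \<le> 1"
    obtain c where c: "c \<in> H" "hdist I x c \<le> 1" using H_cover x by blast
    consider "p = c" "q = c"
      | k l where "k \<in> K" "l \<in> K" "p \<in> T' k" "q \<in> T' l" "c \<in> T k" "c \<in> T l"
      using classify[OF x c p] classify[OF x c q] by blast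
    then show "p = q"
    proof cases
      case (2 k l)
      then have "k = l" using T_disj by (auto simp: disjoint_family_on_def)
      with 2 show ?thesis using T'_code x p(2) q(2) by (auto simp: one_code_iff)
    qed simp
  qed
qed

lemma odd_card_xor:
  "finite S \<Longrightarrow> odd (card {x \<in> S. P x \<noteq> Q x}) \<longleftrightarrow>
     odd (card {x \<in> S. P x}) \<noteq> odd (card {x \<in> S. Q x})"
proof (induction S rule: finite_induct)
  case (insert a S)
  have "{x \<in> insert a S. X x} = (if X a then insert a {x \<in> S. X x} else {x \<in> S. X x})" for X
    by auto
  with insert show ?case by auto
qed simp

definition syn :: "nat \<Rightarrow> word \<Rightarrow> vec" where
  "syn m c = (\<lambda>i. odd (card {\<alpha> \<in> Fdot m. c \<alpha> \<and> \<alpha> i}))"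

lemma finite_Fdot [simp]: "finite (Fdot m)"
  unfolding Fdot_def by (simp add: finite_space)

lemma Fdot_iff: "\<beta> \<in> Fdot m \<longleftrightarrow> \<beta> \<in> Fm m \<and> \<beta> \<noteq> zw"
  by (simp add: Fdot_def)

lemma syn_wadd: "syn m (wadd c d) = wadd (syn m c) (syn m d)"
proof -
  have "{\<alpha> \<in> Fdot m. (c \<alpha> \<noteq> d \<alpha>) \<and> \<alpha> i} = {\<alpha> \<in> Fdot m. (c \<alpha> \<and> \<alpha> i) \<noteq> (d \<alpha> \<and> \<alpha> i)}" for i
    by auto
  then have "odd (card {\<alpha> \<in> Fdot m. (c \<alpha> \<noteq> d \<alpha>) \<and> \<alpha> i}) \<longleftrightarrow>
      odd (card {\<alpha> \<in> Fdot m. c \<alpha> \<and> \<alpha> i}) \<noteq> odd (card {\<alpha> \<in> Fdot m. d \<alpha> \<and> \<alpha> i})" for i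
    by (simp only: odd_card_xor[OF finite_Fdot])
  then show ?thesis
    by (simp only: fun_eq_iff syn_def wadd_apply) blast
qed

lemma syn_zw [simp]: "syn m zw = zw"
  by (simp add: syn_def zw_def fun_eq_iff)

lemma syn_in_Fm: "syn m c \<in> Fm m"
  unfolding space_def syn_def
proof (intro CollectI allI impI)
  fix i assume "i \<notin> {..<m}"
  then have "{\<alpha> \<in> Fdot m. c \<alpha> \<and> \<alpha> i} = {}"
    by (auto simp: Fdot_def space_def)
  then show "\<not> odd (card {\<alpha> \<in> Fdot m. c \<alpha> \<and> \<alpha> i})"
    by (metis card.empty dvd_0_right)
qed

lemma Ham_iff: "c \<in> Ham m \<longleftrightarrow> c \<in> Fn m \<and> syn m c = zw"
proof -
  have "syn m c = zw \<longleftrightarrow> (\<forall>i<m. even (card {\<alpha> \<in> Fdot m. c \<alpha> \<and> \<alpha> i}))"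
    using syn_in_Fm[of m c] by (auto simp: syn_def zw_def fun_eq_iff space_def)
  then show ?thesis
    by (auto simp: Ham_def)
qed

lemma ew_in_Fn: "\<beta> \<in> Fdot m \<Longrightarrow> ew \<beta> \<in> Fn m"
  by (auto simp: space_def ew_def)

lemma syn_ew: "\<beta> \<in> Fdot m \<Longrightarrow> syn m (ew \<beta>) = \<beta>"
proof -
  assume "\<beta> \<in> Fdot m"
  then have "{\<alpha> \<in> Fdot m. ew \<beta> \<alpha> \<and> \<alpha> i} = (if \<beta> i then {\<beta>} else {})" for i
    by (auto simp: ew_def)
  then show ?thesis
    by (simp add: syn_def fun_eq_iff)
qed

lemma unitv_in_Fm: "i < m \<Longrightarrow> unitv i \<in> Fm m"
  by (simp add: space_def unitv_def)

lemma unitv_neq_zw: "unitv i \<noteq> zw"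
  by (auto simp: unitv_def fun_eq_iff)

lemma unitv_in_Fdot: "i < m \<Longrightarrow> unitv i \<in> Fdot m"
  by (simp add: Fdot_iff unitv_in_Fm unitv_neq_zw)

lemma hat_in_Fn: "hat m \<iota> \<in> Fn m"
  using unitv_in_Fdot by (auto simp: space_def hat_def)

lemma hat_unitv: "i < m \<Longrightarrow> hat m \<iota> (unitv i) = \<iota> i"
  by (auto simp: hat_def unitv_def fun_eq_iff)

lemma syn_hat: "\<iota> \<in> Fm m \<Longrightarrow> syn m (hat m \<iota>) = \<iota>"
proof -
  assume \<iota>: "\<iota> \<in> Fm m"
  have "{\<alpha> \<in> Fdot m. hat m \<iota> \<alpha> \<and> \<alpha> i} = (if \<iota> i then {unitv i} else {})" for i
  proof (cases "\<iota> i")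
    case True
    with \<iota> have "i < m" by (auto simp: space_def)
    with True show ?thesis using unitv_in_Fdot[of i m] by (auto simp: hat_def unitv_def)
  qed (auto simp: hat_def unitv_def)
  then show ?thesis
    by (simp add: syn_def fun_eq_iff)
qed

lemma hdist_Fn_le_1_iff:
  "x \<in> Fn m \<Longrightarrow> y \<in> Fn m \<Longrightarrow> hdist (Fdot m) x y \<le> 1 \<longleftrightarrow> x = y \<or> (\<exists>\<beta>\<in>Fdot m. x = wadd y (ew \<beta>))"
  using hdist_le_1_iff[of "Fdot m" x y] by (simp add: ew_def)

lemma Ham_near_eq:
  assumes x: "x \<in> Fn m" and c: "c \<in> Ham m" "hdist (Fdot m) x c \<le> 1"
  shows "c = (if syn m x = zw then x else wadd x (ew (syn m x)))"
proof -
  have "c \<in> Fn m" "syn m c = zw" using c by (auto simp: Ham_iff)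
  with x c(2) consider "x = c" | \<beta> where "\<beta> \<in> Fdot m" "x = wadd c (ew \<beta>)"
    using hdist_Fn_le_1_iff by blast
  then show ?thesis
  proof cases
    case (2 \<beta>)
    then have "syn m x = \<beta>" "\<beta> \<noteq> zw"
      using \<open>syn m c = zw\<close> by (simp_all add: syn_wadd syn_ew Fdot_iff)
    with 2 show ?thesis by (simp add: wadd.assoc)
  qed (simp add: \<open>syn m c = zw\<close>)
qed

lemma one_perfect_Ham: "one_perfect (Fdot m) (Ham m)"
  unfolding one_perfect_def one_code_iff nbhd_eq_space_iff
proof (intro conjI ballI impI)
  show "Ham m \<subseteq> Fn m" by (auto simp: Ham_iff)
next
  fix x assume x: "x \<in> Fn m"
  show "\<exists>c\<in>Ham m. hdist (Fdot m) x c \<le> 1"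
  proof (cases "syn m x = zw")
    case True
    with x show ?thesis by (intro bexI[of _ x]) (simp_all add: Ham_iff hdist_def)
  next
    case False
    let ?c = "wadd x (ew (syn m x))"
    have \<beta>: "syn m x \<in> Fdot m" using False syn_in_Fm by (simp add: Fdot_iff)
    then have "?c \<in> Ham m" using x by (simp add: Ham_iff syn_wadd syn_ew wadd_space ew_in_Fn)
    moreover have "x = wadd ?c (ew (syn m x))" by (simp add: wadd.assoc)
    ultimately show ?thesis
      using \<beta> x by (metis Ham_iff hdist_Fn_le_1_iff)
  qed
next
  fix x c d assume "x \<in> Fn m" "c \<in> Ham m" "d \<in> Ham m"
    "hdist (Fdot m) x c \<le> 1" "hdist (Fdot m) x d \<le> 1"
  then show "c = d" using Ham_near_eq[of x m c] Ham_near_eq[of x m d] by simp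
qed

lemma Ham_wadd: "c \<in> Ham m \<Longrightarrow> d \<in> Ham m \<Longrightarrow> wadd c d \<in> Ham m"
  by (simp add: Ham_iff syn_wadd wadd_space)

lemma R_subset_Ham: "R m \<iota> \<subseteq> Ham m"
  by (auto simp: R_def)

lemma zw_in_R: "zw \<in> R m \<iota>"
  by (simp add: R_def Ham_iff)

lemma R_wadd: "c \<in> R m \<iota> \<Longrightarrow> d \<in> R m \<iota> \<Longrightarrow> wadd c d \<in> R m \<iota>"
  by (auto simp: R_def Ham_wadd wadd_apply)

lemma ew_triple_in_R:
  assumes \<iota>: "\<iota> \<in> Fdot m" and \<beta>: "\<beta> \<in> Fdot m" "\<beta> \<noteq> \<iota>"
  shows "wadd (ew \<iota>) (wadd (ew \<beta>) (ew (wadd \<beta> \<iota>))) \<in> R m \<iota>"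
proof -
  have "wadd \<beta> \<iota> \<in> Fdot m"
    using \<iota> \<beta> by (auto simp: Fdot_iff wadd_space wadd_eq_iff)
  then have "wadd (ew \<iota>) (wadd (ew \<beta>) (ew (wadd \<beta> \<iota>))) \<in> Ham m"
    using \<iota> \<beta> by (simp add: Ham_iff syn_wadd syn_ew ew_in_Fn wadd_space wadd_ac)
  moreover have "(wadd \<alpha> \<iota> = \<iota> \<longleftrightarrow> \<alpha> = zw) \<and> (wadd \<alpha> \<iota> = \<beta> \<longleftrightarrow> \<alpha> = wadd \<beta> \<iota>)
      \<and> (wadd \<alpha> \<iota> = wadd \<beta> \<iota> \<longleftrightarrow> \<alpha> = \<beta>)" for \<alpha>
    by (auto simp: wadd_def zw_def fun_eq_iff)
  ultimately show ?thesis
    by (auto simp: R_def wadd_apply ew_def)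
qed

definition switch_out :: "nat \<Rightarrow> vec \<Rightarrow> word set" where
  "switch_out m \<iota> = translate (R m \<iota>) (wadd (hat m \<iota>) (ew \<iota>))"

definition switch_in :: "nat \<Rightarrow> vec \<Rightarrow> word set" where
  "switch_in m \<iota> = translate (R m \<iota>) (hat m \<iota>)"

lemma PC_switch: "PC m C = (Ham m - (\<Union>\<iota>\<in>C - {zw}. switch_out m \<iota>)) \<union> (\<Union>\<iota>\<in>C - {zw}. switch_in m \<iota>)"
  by (simp add: PC_def switch_out_def switch_in_def)

lemma switch_out_subset_Ham:
  assumes "\<iota> \<in> Fdot m"
  shows "switch_out m \<iota> \<subseteq> Ham m"
proof -
  have "wadd (hat m \<iota>) (ew \<iota>) \<in> Ham m"
    using assms by (simp add: Ham_iff syn_wadd syn_ew syn_hat Fdot_iff hat_in_Fn ew_in_Fn wadd_space)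
  then show ?thesis
    using R_subset_Ham[of m \<iota>] by (auto simp: switch_out_def translate_def intro: Ham_wadd)
qed

lemma translate_translate: "translate (translate M v) w = translate M (wadd v w)"
  by (auto simp: translate_def image_image wadd.assoc)

lemma switch_in_eq: "switch_in m \<iota> = translate (switch_out m \<iota>) (ew \<iota>)"
  and switch_out_eq: "switch_out m \<iota> = translate (switch_in m \<iota>) (ew \<iota>)"
  by (simp_all add: switch_in_def switch_out_def translate_translate wadd.assoc)

lemma translate_R_closed:
  assumes "c \<in> translate (R m \<iota>) v" "r \<in> R m \<iota>"
  shows "wadd c r \<in> translate (R m \<iota>) v"
proof -
  obtain d where "d \<in> R m \<iota>" "c = wadd d v" using assms(1) by (auto simp: translate_def)
  then have "wadd c r = wadd (wadd d r) v" "wadd d r \<in> R m \<iota>"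
    using assms(2) by (simp_all add: wadd_ac R_wadd)
  then show ?thesis by (simp add: translate_def)
qed

text \<open>A word \<open>c + e\<^sub>\<iota> + e\<^sub>\<beta>\<close> with \<open>\<beta> \<noteq> \<iota>\<close> is at distance 1 from \<open>c + e\<^sub>\<iota> + e\<^sub>\<beta> + e\<^sub>\<beta>\<^sub>+\<^sub>\<iota>\<close>, which lies
  in \<open>M\<close> because \<open>e\<^sub>\<iota> + e\<^sub>\<beta> + e\<^sub>\<beta>\<^sub>+\<^sub>\<iota> \<in> R\<^sub>\<iota>\<close>.\<close>

lemma nbhd_translate_ew_subset:
  assumes M: "M \<subseteq> Fn m" and \<iota>: "\<iota> \<in> Fdot m"
    and closed: "\<And>c r. c \<in> M \<Longrightarrow> r \<in> R m \<iota> \<Longrightarrow> wadd c r \<in> M"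
  shows "nbhd (Fdot m) (translate M (ew \<iota>)) \<subseteq> nbhd (Fdot m) M"
proof
  fix x assume "x \<in> nbhd (Fdot m) (translate M (ew \<iota>))"
  then obtain c where x: "x \<in> Fn m" and c: "c \<in> M" and near: "hdist (Fdot m) x (wadd c (ew \<iota>)) \<le> 1"
    by (auto simp: nbhd_def translate_def)
  have cF: "c \<in> Fn m" "wadd c (ew \<iota>) \<in> Fn m" using M c \<iota> by (auto intro: wadd_space ew_in_Fn)
  have near_M: "x \<in> nbhd (Fdot m) M" if "y \<in> M" "x = y \<or> (\<exists>\<beta>\<in>Fdot m. x = wadd y (ew \<beta>))" for y
    using that x M hdist_Fn_le_1_iff[of x m y] by (auto simp: nbhd_def)
  from near consider "x = wadd c (ew \<iota>)" | \<beta> where "\<beta> \<in> Fdot m" "x = wadd (wadd c (ew \<iota>)) (ew \<beta>)"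
    using hdist_Fn_le_1_iff[OF x cF(2)] by blast
  then show "x \<in> nbhd (Fdot m) M"
  proof cases
    case 1
    then show ?thesis using near_M[OF c] \<iota> by blast
  next
    case (2 \<beta>)
    show ?thesis
    proof (cases "\<beta> = \<iota>")
      case True
      with 2 show ?thesis using near_M[OF c] by (simp add: wadd.assoc)
    next
      case False
      let ?w = "wadd (ew \<iota>) (wadd (ew \<beta>) (ew (wadd \<beta> \<iota>)))"
      have "wadd c ?w \<in> M" using closed[OF c ew_triple_in_R[OF \<iota> 2(1) False]] .
      moreover have "x = wadd (wadd c ?w) (ew (wadd \<beta> \<iota>))"
        using 2(2) by (simp add: wadd_ac)
      moreover have "wadd \<beta> \<iota> \<in> Fdot m"
        using \<iota> 2(1) False by (auto simp: Fdot_iff wadd_space wadd_eq_iff)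
      ultimately show ?thesis using near_M by blast
    qed
  qed
qed

lemma switch_in_subset_Fn: "switch_in m \<iota> \<subseteq> Fn m"
  using R_subset_Ham[of m \<iota>] by (auto simp: switch_in_def translate_def Ham_iff intro!: wadd_space hat_in_Fn)

lemma nbhd_switch_in:
  assumes \<iota>: "\<iota> \<in> Fdot m"
  shows "nbhd (Fdot m) (switch_in m \<iota>) = nbhd (Fdot m) (switch_out m \<iota>)"
proof
  have "switch_out m \<iota> \<subseteq> Fn m"
    using switch_out_subset_Ham[OF \<iota>] by (auto simp: Ham_iff)
  moreover have "wadd c r \<in> switch_out m \<iota>" if "c \<in> switch_out m \<iota>" "r \<in> R m \<iota>" for c r
    using that unfolding switch_out_def by (rule translate_R_closed)
  ultimately have "nbhd (Fdot m) (translate (switch_out m \<iota>) (ew \<iota>)) \<subseteq> nbhd (Fdot m) (switch_out m \<iota>)"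
    using nbhd_translate_ew_subset[OF _ \<iota>] by blast
  then show "nbhd (Fdot m) (switch_in m \<iota>) \<subseteq> nbhd (Fdot m) (switch_out m \<iota>)"
    by (simp only: switch_in_eq)
next
  have "wadd c r \<in> switch_in m \<iota>" if "c \<in> switch_in m \<iota>" "r \<in> R m \<iota>" for c r
    using that unfolding switch_in_def by (rule translate_R_closed)
  then have "nbhd (Fdot m) (translate (switch_in m \<iota>) (ew \<iota>)) \<subseteq> nbhd (Fdot m) (switch_in m \<iota>)"
    using nbhd_translate_ew_subset[OF switch_in_subset_Fn \<iota>] by blast
  then show "nbhd (Fdot m) (switch_out m \<iota>) \<subseteq> nbhd (Fdot m) (switch_in m \<iota>)"
    by (simp only: switch_out_eq)
qed

lemma one_code_switch_in:
  assumes "\<iota> \<in> Fdot m"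
  shows "one_code (Fdot m) (switch_in m \<iota>)"
proof -
  have "one_code (Fdot m) (switch_out m \<iota>)"
    using one_perfect_Ham switch_out_subset_Ham[OF assms]
    unfolding one_perfect_def by (blast intro: one_code_subset)
  then show ?thesis
    unfolding switch_in_eq using ew_in_Fn[OF assms] by (rule one_code_translate)
qed

text \<open>Hamming weight at least 3, phrased as: not a sum of at most two unit vectors
  (\<open>j = l\<close> excludes \<open>0\<close>).\<close>

definition weight_ge3 :: "vec \<Rightarrow> bool" where
  "weight_ge3 x \<longleftrightarrow> (\<forall>j. x \<noteq> unitv j) \<and> (\<forall>j l. x \<noteq> wadd (unitv j) (unitv l))"

lemma weight_ge3_neq:
  assumes "weight_ge3 x"
  shows "x \<noteq> zw" "x \<noteq> unitv j" "wadd (unitv j) x \<noteq> unitv l"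
proof -
  show "x \<noteq> zw" using assms wadd_self[of "unitv j"] unfolding weight_ge3_def by metis
  show "x \<noteq> unitv j" using assms unfolding weight_ge3_def by blast
  show "wadd (unitv j) x \<noteq> unitv l" using assms unfolding weight_ge3_def by (metis wadd_eq_iff)
qed

lemma hdist_wadd_unitv: "j < m \<Longrightarrow> hdist {..<m} (wadd x (unitv j)) x = 1"
proof -
  assume "j < m"
  then have "{i \<in> {..<m}. wadd x (unitv j) i \<noteq> x i} = {j}"
    by (auto simp: wadd_apply unitv_def)
  then show ?thesis by (simp add: hdist_def)
qed

text \<open>Otherwise some word of \<open>F\<^sup>m\<close> would be within distance 1 of both \<open>\<iota>\<close> and \<open>\<kappa>\<close>.\<close>

lemma one_code_weight_ge3:
  assumes C: "one_code {..<m} C" and "\<iota> \<in> C" "\<kappa> \<in> C" "\<iota> \<noteq> \<kappa>"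
  shows "weight_ge3 (wadd \<iota> \<kappa>)"
proof -
  have \<iota>\<kappa>: "\<iota> \<in> Fm m" "\<kappa> \<in> Fm m" using C assms by (auto simp: one_code_def)
  have no_common: "\<not> (hdist {..<m} x \<iota> \<le> 1 \<and> hdist {..<m} x \<kappa> \<le> 1)" if "x \<in> Fm m" for x
    using C assms that by (auto simp: one_code_iff)
  have support: "j < m" if "wadd \<iota> \<kappa> j" for j
    using that \<iota>\<kappa> by (auto simp: space_def wadd_apply)
  have "wadd \<iota> \<kappa> \<noteq> unitv j" for j
  proof
    assume eq: "wadd \<iota> \<kappa> = unitv j"
    then have "j < m" using support by (simp add: unitv_def)
    moreover have "\<iota> = wadd \<kappa> (unitv j)" using eq by (metis wadd.commute wadd_eq_iff)
    ultimately show False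
      using no_common[OF \<iota>\<kappa>(1)] hdist_wadd_unitv[of j m \<kappa>] by (simp add: hdist_def)
  qed
  moreover have "wadd \<iota> \<kappa> \<noteq> wadd (unitv j) (unitv l)" for j l
  proof
    assume eq: "wadd \<iota> \<kappa> = wadd (unitv j) (unitv l)"
    then have "j \<noteq> l" using assms(4) by (auto simp: wadd_eq_iff)
    then have "j < m" "l < m" using support eq by (auto simp: wadd_apply unitv_def)
    moreover have "wadd \<iota> (unitv j) = wadd \<kappa> (unitv l)"
      using eq by (metis wadd.commute wadd.left_commute wadd_eq_iff)
    moreover have "wadd \<iota> (unitv j) \<in> Fm m"
      using wadd_space[OF \<iota>\<kappa>(1) unitv_in_Fm[OF \<open>j < m\<close>]] .
    ultimately show False
      using no_common[of "wadd \<iota> (unitv j)"] hdist_wadd_unitv[of j m \<iota>] hdist_wadd_unitv[of l m \<kappa>]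
      by simp
  qed
  ultimately show ?thesis by (simp add: weight_ge3_def)
qed

lemma hat_not_unitv: "(\<forall>j. \<beta> \<noteq> unitv j) \<Longrightarrow> \<not> hat m \<iota> \<beta>"
  by (auto simp: hat_def)

lemma switch_out_flip:
  assumes u: "u \<in> switch_out m \<iota>" and \<alpha>: "\<alpha> \<in> Fm m" "\<alpha> \<noteq> zw" "\<alpha> \<noteq> \<iota>"
  shows "u \<alpha> \<noteq> u (wadd \<alpha> \<iota>) \<longleftrightarrow> hat m \<iota> \<alpha> \<noteq> hat m \<iota> (wadd \<alpha> \<iota>)"
proof -
  obtain c where c: "c \<in> R m \<iota>" and uc: "u = wadd c (wadd (hat m \<iota>) (ew \<iota>))"
    using u by (auto simp: switch_out_def translate_def)
  have "c \<alpha> = c (wadd \<alpha> \<iota>)" using c \<alpha> by (auto simp: R_def)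
  moreover have "\<not> ew \<iota> \<alpha>" "\<not> ew \<iota> (wadd \<alpha> \<iota>)"
    using \<alpha> by (auto simp: ew_def wadd_eq_iff)
  ultimately show ?thesis
    using uc by (cases "c \<alpha>") (simp_all add: wadd_apply)
qed

lemma switch_out_disjoint_at:
  assumes \<iota>: "\<iota> \<in> Fm m" "weight_ge3 \<iota>" and \<kappa>: "\<kappa> \<in> Fm m" "weight_ge3 \<kappa>"
    and \<iota>\<kappa>: "weight_ge3 (wadd \<iota> \<kappa>)" and i: "\<iota> i" "\<not> \<kappa> i"
  shows "switch_out m \<iota> \<inter> switch_out m \<kappa> = {}"
proof (rule ccontr)
  assume "switch_out m \<iota> \<inter> switch_out m \<kappa> \<noteq> {}"
  then obtain u where u: "u \<in> switch_out m \<iota>" "u \<in> switch_out m \<kappa>" by blast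
  have "i < m" using \<iota> i by (auto simp: space_def)
  define a where "a = unitv i"
  have a: "a \<in> Fm m" "a \<noteq> zw" "hat m \<iota> a" "\<not> hat m \<kappa> a"
    using \<open>i < m\<close> i by (simp_all add: a_def unitv_in_Fm unitv_neq_zw hat_unitv)
  have "wadd \<iota> \<kappa> \<noteq> a" using weight_ge3_neq(2)[OF \<iota>\<kappa>] by (simp add: a_def)
  then have ne: "a \<noteq> \<iota>" "a \<noteq> \<kappa>" "wadd a \<kappa> \<noteq> \<iota>" "wadd a \<iota> \<noteq> \<kappa>"
    using weight_ge3_neq(2)[OF \<iota>(2)] weight_ge3_neq(2)[OF \<kappa>(2)]
    by (auto simp: a_def wadd_ac)
  have not_unit: "\<forall>j. wadd a \<iota> \<noteq> unitv j" "\<forall>j. wadd a \<kappa> \<noteq> unitv j"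
    "\<forall>j. wadd a (wadd \<iota> \<kappa>) \<noteq> unitv j"
    using weight_ge3_neq[OF \<iota>(2)] weight_ge3_neq[OF \<kappa>(2)] weight_ge3_neq[OF \<iota>\<kappa>]
    by (simp_all add: a_def)
  have Fm: "wadd a \<iota> \<in> Fm m" "wadd a \<kappa> \<in> Fm m"
    using a \<iota> \<kappa> by (simp_all add: wadd_space)
  have nz: "wadd a \<iota> \<noteq> zw" "wadd a \<kappa> \<noteq> zw"
    using ne by (auto simp: wadd_eq_iff)
  have "u a \<noteq> u (wadd a \<iota>)"
    using switch_out_flip[OF u(1) a(1,2) ne(1)] a hat_not_unitv[OF not_unit(1)] by simp
  moreover have "u (wadd a \<kappa>) = u (wadd a (wadd \<iota> \<kappa>))"
    using switch_out_flip[OF u(1) Fm(2) nz(2) ne(3)] hat_not_unitv[OF not_unit(2)]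
      hat_not_unitv[OF not_unit(3)] by (simp add: wadd_ac)
  moreover have "u a = u (wadd a \<kappa>)"
    using switch_out_flip[OF u(2) a(1,2) ne(2)] a hat_not_unitv[OF not_unit(2)] by simp
  moreover have "u (wadd a \<iota>) = u (wadd a (wadd \<iota> \<kappa>))"
    using switch_out_flip[OF u(2) Fm(1) nz(1) ne(4)] hat_not_unitv[OF not_unit(1)]
      hat_not_unitv[OF not_unit(3)] by (simp add: wadd_ac)
  ultimately show False by simp
qed

lemma switch_out_disjoint:
  assumes "\<iota> \<in> Fm m" "weight_ge3 \<iota>" "\<kappa> \<in> Fm m" "weight_ge3 \<kappa>" "weight_ge3 (wadd \<iota> \<kappa>)"
  shows "switch_out m \<iota> \<inter> switch_out m \<kappa> = {}"
proof -
  obtain i where "\<iota> i \<noteq> \<kappa> i"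
    using weight_ge3_neq(1)[OF assms(5)] by (auto simp: fun_eq_iff wadd_apply)
  then consider "\<iota> i" "\<not> \<kappa> i" | "\<kappa> i" "\<not> \<iota> i" by blast
  then show ?thesis
  proof cases
    case 2
    then show ?thesis
      using switch_out_disjoint_at[of \<kappa> m \<iota>] assms by (auto simp: wadd.commute)
  qed (use switch_out_disjoint_at assms in blast)
qed

lemma disjoint_family_switch_out:
  assumes C: "one_code {..<m} C" "zw \<in> C"
  shows "disjoint_family_on (switch_out m) (C - {zw})"
  unfolding disjoint_family_on_def
proof (intro ballI impI)
  fix \<iota> \<kappa> assume "\<iota> \<in> C - {zw}" "\<kappa> \<in> C - {zw}" "\<iota> \<noteq> \<kappa>"
  moreover have "C \<subseteq> Fm m" using C(1) by (simp add: one_code_def)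
  ultimately show "switch_out m \<iota> \<inter> switch_out m \<kappa> = {}"
    using one_code_weight_ge3[OF C(1)] one_code_weight_ge3[OF C] by (intro switch_out_disjoint) auto
qed

lemma zw_notin_switch_out:
  assumes \<kappa>: "\<kappa> \<in> Fm m" "weight_ge3 \<kappa>"
  shows "zw \<notin> switch_out m \<kappa>"
proof
  assume z: "zw \<in> switch_out m \<kappa>"
  obtain i where "\<kappa> i" using weight_ge3_neq(1)[OF \<kappa>(2)] by (auto simp: fun_eq_iff)
  then have "i < m" using \<kappa> by (auto simp: space_def)
  have "unitv i \<noteq> \<kappa>" "\<forall>j. wadd (unitv i) \<kappa> \<noteq> unitv j"
    using weight_ge3_neq[OF \<kappa>(2)] by auto
  then show False
    using switch_out_flip[OF z unitv_in_Fm[OF \<open>i < m\<close>] unitv_neq_zw] \<open>\<kappa> i\<close>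
      hat_unitv[OF \<open>i < m\<close>, of \<kappa>] hat_not_unitv[of "wadd (unitv i) \<kappa>" m \<kappa>] by simp
qed

lemma syn_switch_in: "y \<in> switch_in m \<kappa> \<Longrightarrow> \<kappa> \<in> Fm m \<Longrightarrow> syn m y = \<kappa>"
  using R_subset_Ham[of m \<kappa>] by (auto simp: switch_in_def translate_def syn_wadd syn_hat Ham_iff)

lemma hat_zw: "hat m zw = zw"
  by (simp add: hat_def fun_eq_iff)

lemma hat_in_switch_in: "hat m \<iota> \<in> switch_in m \<iota>"
  using zw_in_R[of m \<iota>] by (force simp: switch_in_def translate_def)

lemma hat_in_PC_iff:
  assumes \<iota>: "\<iota> \<in> Fm m" and C: "C \<subseteq> Fm m" "zw \<in> C" and heavy: "\<And>\<kappa>. \<kappa> \<in> C - {zw} \<Longrightarrow> weight_ge3 \<kappa>"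
  shows "hat m \<iota> \<in> PC m C \<longleftrightarrow> \<iota> \<in> C"
proof (cases "\<iota> = zw")
  case True
  have "zw \<notin> switch_out m \<kappa>" if "\<kappa> \<in> C - {zw}" for \<kappa>
    using that C heavy zw_notin_switch_out by blast
  moreover have "zw \<in> Ham m" by (simp add: Ham_iff)
  ultimately have "zw \<in> PC m C"
    unfolding PC_switch by blast
  with True C(2) show ?thesis by (simp add: hat_zw)
next
  case False
  have in_switch_in: "hat m \<iota> \<in> switch_in m \<kappa> \<longleftrightarrow> \<kappa> = \<iota>" if "\<kappa> \<in> Fm m" for \<kappa>
  proof
    assume "hat m \<iota> \<in> switch_in m \<kappa>"
    then have "syn m (hat m \<iota>) = \<kappa>" using that by (rule syn_switch_in)
    then show "\<kappa> = \<iota>" by (simp add: syn_hat[OF \<iota>])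
  qed (simp add: hat_in_switch_in)
  have "hat m \<iota> \<notin> Ham m"
    using False \<iota> by (simp add: Ham_iff syn_hat)
  then have "hat m \<iota> \<in> PC m C \<longleftrightarrow> (\<exists>\<kappa>\<in>C - {zw}. hat m \<iota> \<in> switch_in m \<kappa>)"
    unfolding PC_switch by blast
  also have "\<dots> \<longleftrightarrow> (\<exists>\<kappa>\<in>C - {zw}. \<kappa> = \<iota>)"
    using in_switch_in C(1) by (intro bex_cong) auto
  finally show ?thesis using False by blast
qed

theorem mainTheorem1:
  fixes m :: nat and C :: "vec set"
  assumes "m \<ge> 1"
    and "one_code {..<m} C"
    and "zw \<in> C"
  shows "one_perfect (Fdot m) (PC m C) \<and> C = {\<iota> \<in> Fm m. hat m \<iota> \<in> PC m C}"
proof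
  have C_Fm: "C \<subseteq> Fm m"
    using assms(2) by (simp add: one_code_def)
  have dot: "\<iota> \<in> Fdot m" and heavy: "weight_ge3 \<iota>" if "\<iota> \<in> C - {zw}" for \<iota>
    using that C_Fm one_code_weight_ge3[OF assms(2) _ assms(3), of \<iota>] by (auto simp: Fdot_iff)
  show "one_perfect (Fdot m) (PC m C)"
    unfolding PC_switch
    by (rule one_perfect_switch[OF one_perfect_Ham _ disjoint_family_switch_out[OF assms(2,3)]])
      (simp_all add: dot switch_out_subset_Ham one_code_switch_in nbhd_switch_in)
  show "C = {\<iota> \<in> Fm m. hat m \<iota> \<in> PC m C}"
    using hat_in_PC_iff[OF _ C_Fm assms(3) heavy] C_Fm by blast
qed

end
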